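(* On the first Heisenberg group $\mathbb H^1$, for every $k\in\mathbb N$ the polynomials $$P(z,t)=\big((1+k)t+ik|z|^2\big)z^k\qquad\text{and}\qquad \tilde P(z,t)=\big((1+k)t-ik|z|^2\big)\bar z^k$$ are strongly harmonic on $\mathbb H^1$ with respect to the balls of the gauge $\mathcal N(z,t)=(|z|^4+t^2)^{1/4}$; i.e. for every $p\in\mathbb H^1$ and $R>0$, $P(p)=\frac{1}{|B(p,R)|}\int_{B(p,R)}P(q)\,dq$, and likewise for $\tilde P$.
   Context: $\mathbb H^1=\mathbb C\times\mathbb R$ with coordinates $(z,t)$, $z=x+iy$, and group law $(z_1,t_1)(z_2,t_2)=(z_1+z_2,\,t_1+t_2+2\,\mathrm{Im}(z_1\bar z_2))$; $(z,t)^{-1}=(-z,-t)$. The measure $dq$ is Lebesgue measure on $\mathbb R^3$. Balls are $B(p,R)=\{q:\mathcal N(p^{-1}q)\le R\}$. The mean value property for complex-valued functions is understood componentwise (equivalently, for the complex integral). *)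

theory Defs
  imports "HOL-Analysis.Analysis"
begin

text \<open>Points of the first Heisenberg group H^1 = C x R, as the euclidean space
  complex \<times> real (Lebesgue measure on this type is Lebesgue measure on R^3).\<close>

definition heis_mult :: "complex \<times> real \<Rightarrow> complex \<times> real \<Rightarrow> complex \<times> real" where
  "heis_mult p q = (fst p + fst q, snd p + snd q + 2 * Im (fst p * cnj (fst q)))"

definition heis_inv :: "complex \<times> real \<Rightarrow> complex \<times> real" where
  "heis_inv p = (- fst p, - snd p)"

definition heis_gauge :: "complex \<times> real \<Rightarrow> real" where
  "heis_gauge p = ((cmod (fst p)) ^ 4 + (snd p)\<^sup>2) powr (1/4)"

definition heis_ball :: "complex \<times> real \<Rightarrow> real \<Rightarrow> (complex \<times> real) set" where
  "heis_ball p R = {q. heis_gauge (heis_mult (heis_inv p) q) \<le> R}"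

text \<open>Mean value property over gauge balls (complex-valued, HK integral = Lebesgue integral
  for integrable functions).\<close>
definition strongly_harmonic :: "(complex \<times> real \<Rightarrow> complex) \<Rightarrow> bool" where
  "strongly_harmonic f \<longleftrightarrow> (\<forall>p. \<forall>R>0.
      f integrable_on heis_ball p R \<and>
      f p = integral (heis_ball p R) f / complex_of_real (measure lebesgue (heis_ball p R)))"

definition heisP :: "nat \<Rightarrow> complex \<times> real \<Rightarrow> complex" where
  "heisP k q = (complex_of_real ((1 + real k) * snd q) + \<i> * complex_of_real (real k * (cmod (fst q))\<^sup>2))
               * (fst q) ^ k"

definition heisPt :: "nat \<Rightarrow> complex \<times> real \<Rightarrow> complex" where
  "heisPt k q = (complex_of_real ((1 + real k) * snd q) - \<i> * complex_of_real (real k * (cmod (fst q))\<^sup>2))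
               * (cnj (fst q)) ^ k"

end

theory Submission
  imports Defs
begin

text \<open>
  Gauge balls are left translates, \<open>B(p, R) = p \<cdot> B(0, R)\<close>, and left translation preserves
  Lebesgue measure (it is a translation composed with a shear), so the mean value property of a
  continuous \<open>f\<close> at \<open>p\<close> amounts to \<open>\<integral>\<^bsub>B(0,R)\<^esub> f(p \<cdot> q) - f(p) dq = 0\<close>.
  The ball \<open>B(0, R)\<close> and Lebesgue measure are invariant under the reflection \<open>t \<mapsto> -t\<close>
  and under the rotations \<open>z \<mapsto> \<zeta> z\<close> (a rotation is a product of three shears), so this
  integral does not change if the integrand is averaged over the rotations by the \<open>N\<close>-th roots
  of unity and the reflection. For \<open>f = P\<close> and \<open>N \<ge> k + 2\<close> that average vanishes
  identically: pairing \<open>t\<close> with \<open>-t\<close> leaves a polynomial in \<open>v = \<zeta> z\<close> and its conjugate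
  whose dependence on \<open>\<zeta>\<close> sits in \<open>(w + v)\<^sup>k\<close>, \<open>\<zeta> (w + v)\<^sup>k\<close> and \<open>cnj \<zeta> (w + v)\<^sup>k\<close>.
  Their averages over \<open>\<zeta>\<close> are \<open>w\<^sup>k\<close>, \<open>0\<close> and \<open>k z w\<^sup>k\<^sup>-\<^sup>1\<close>, which recombine to \<open>P(p)\<close> for
  \<open>p = (w, s)\<close>. The second polynomial is the complex conjugate of the first.
\<close>

section \<open>Maps preserving Lebesgue measure\<close>

definition lborel_preserving :: "('a::euclidean_space \<Rightarrow> 'b::euclidean_space) \<Rightarrow> bool" where
  "lborel_preserving T \<longleftrightarrow> T \<in> borel_measurable borel \<and> distr lborel borel T = lborel"

lemma lborel_preserving_id: "lborel_preserving (\<lambda>x. x)"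
  unfolding lborel_preserving_def by (simp add: distr_id2)

lemma lborel_preserving_comp:
  assumes "lborel_preserving f" "lborel_preserving g"
  shows "lborel_preserving (g \<circ> f)"
proof -
  have f: "f \<in> borel_measurable borel" and g: "g \<in> borel_measurable borel"
    using assms by (simp_all add: lborel_preserving_def)
  have "distr lborel borel (g \<circ> f) = distr (distr lborel borel f) borel g"
    using f g by (subst distr_distr) auto
  with assms f g show ?thesis
    by (simp add: lborel_preserving_def measurable_comp)
qed

lemma lborel_preserving_integral:
  fixes f :: "'b::euclidean_space \<Rightarrow> 'c::{banach, second_countable_topology}"
  assumes "lborel_preserving T" "f \<in> borel_measurable borel"
  shows "(\<integral>x. f (T x) \<partial>lborel) = (\<integral>x. f x \<partial>lborel)"
  using integral_distr[of T lborel borel f] assms by (simp add: lborel_preserving_def)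

lemma lborel_preserving_integrable:
  fixes f :: "'b::euclidean_space \<Rightarrow> 'c::{banach, second_countable_topology}"
  assumes "lborel_preserving T" "integrable lborel f"
  shows "integrable lborel (\<lambda>x. f (T x))"
proof -
  have "f \<in> borel_measurable borel"
    using borel_measurable_integrable[OF assms(2)] by simp
  with assms integrable_distr_eq[of T lborel borel f] show ?thesis
    by (simp add: lborel_preserving_def)
qed

lemma lborel_preserving_measure_vimage:
  assumes "lborel_preserving T" "A \<in> sets borel"
  shows "measure lborel (T -` A) = measure lborel A"
  using measure_distr[of T lborel borel A] assms by (simp add: lborel_preserving_def)

lemma lborel_preserving_translation: "lborel_preserving ((+) c)"
  unfolding lborel_preserving_def
  by (simp add: lborel_distr_plus borel_measurable_continuous_onI continuous_intros)

lemma lborel_preserving_uminus: "lborel_preserving (uminus :: real \<Rightarrow> real)"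
  unfolding lborel_preserving_def
  by (simp add: lborel_distr_uminus borel_measurable_continuous_onI continuous_intros)

lemma lborel_preserving_fiberwise:
  fixes \<phi> :: "'a::euclidean_space \<Rightarrow> 'b::euclidean_space \<Rightarrow> 'b"
  assumes meas: "(\<lambda>q. (fst q, \<phi> (fst q) (snd q))) \<in> borel_measurable borel"
    and fibre: "\<And>x. lborel_preserving (\<phi> x)"
  shows "lborel_preserving (\<lambda>q. (fst q, \<phi> (fst q) (snd q)))"
proof -
  let ?T = "\<lambda>q. (fst q, \<phi> (fst q) (snd q))"
  let ?M = "lborel \<Otimes>\<^sub>M lborel :: ('a \<times> 'b) measure"
  have T: "?T \<in> ?M \<rightarrow>\<^sub>M borel"
    using meas by (simp add: lborel_prod)
  have "distr ?M borel ?T = ?M"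
  proof (rule measure_eqI)
    fix A assume "A \<in> sets (distr ?M borel ?T)"
    then have A_borel: "A \<in> sets borel"
      by simp
    then have A: "A \<in> sets ?M"
      by (metis lborel_prod sets_lborel)
    have "emeasure (distr ?M borel ?T) A = emeasure ?M (?T -` A \<inter> space ?M)"
      by (rule emeasure_distr[OF T A_borel])
    also have "\<dots> = (\<integral>\<^sup>+x. emeasure lborel (Pair x -` (?T -` A \<inter> space ?M)) \<partial>lborel)"
      using measurable_sets[OF T A_borel] by (rule lborel.emeasure_pair_measure_alt)
    also have "\<dots> = (\<integral>\<^sup>+x. emeasure lborel (Pair x -` A) \<partial>lborel)"
    proof (rule nn_integral_cong)
      fix x
      have \<phi>x: "\<phi> x \<in> lborel \<rightarrow>\<^sub>M borel" "distr lborel borel (\<phi> x) = lborel"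
        using fibre[of x] by (simp_all add: lborel_preserving_def)
      have A_x: "Pair x -` A \<in> sets borel"
        using A by (metis sets_Pair1 sets_lborel)
      have "emeasure lborel (Pair x -` (?T -` A \<inter> space ?M))
          = emeasure lborel (\<phi> x -` (Pair x -` A) \<inter> space lborel)"
        by (rule arg_cong[where f = "emeasure lborel"]) (auto simp: space_pair_measure)
      also have "\<dots> = emeasure (distr lborel borel (\<phi> x)) (Pair x -` A)"
        by (rule emeasure_distr[OF \<phi>x(1) A_x, symmetric])
      finally show "emeasure lborel (Pair x -` (?T -` A \<inter> space ?M)) = emeasure lborel (Pair x -` A)"
        by (simp add: \<phi>x(2))
    qed
    also have "\<dots> = emeasure ?M A"
      using A by (rule lborel.emeasure_pair_measure_alt[symmetric])
    finally show "emeasure (distr ?M borel ?T) A = emeasure ?M A" .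
  qed (simp add: lborel_prod borel_prod[symmetric])
  with meas show ?thesis
    by (simp add: lborel_preserving_def lborel_prod)
qed

lemma lborel_preserving_shear:
  fixes g :: "'a::euclidean_space \<Rightarrow> 'b::euclidean_space"
  assumes "continuous_on UNIV g"
  shows "lborel_preserving (\<lambda>q. (fst q, g (fst q) + snd q))"
  by (rule lborel_preserving_fiberwise[where \<phi> = "\<lambda>x. (+) (g x)"])
    (auto intro!: borel_measurable_continuous_onI continuous_intros
      continuous_on_compose2[OF assms] lborel_preserving_translation)

lemma lborel_preserving_reflect_snd:
  "lborel_preserving (\<lambda>q::'a::euclidean_space \<times> real. (fst q, - snd q))"
  by (rule lborel_preserving_fiberwise[where \<phi> = "\<lambda>x. uminus"])
    (auto intro!: borel_measurable_continuous_onI continuous_intros lborel_preserving_uminus)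

lemma lborel_preserving_swap:
  "lborel_preserving (\<lambda>q::'a::euclidean_space \<times> 'b::euclidean_space. (snd q, fst q))"
proof -
  have "(lborel \<Otimes>\<^sub>M lborel :: ('b \<times> 'a) measure)
      = distr (lborel \<Otimes>\<^sub>M lborel) (lborel \<Otimes>\<^sub>M lborel) (\<lambda>(x, y). (y, x))"
    by (rule pair_sigma_finite.distr_pair_swap) unfold_locales
  also have "\<dots> = distr lborel borel (\<lambda>q::'a \<times> 'b. (snd q, fst q))"
    proof (rule distr_cong)
    show "sets (lborel \<Otimes>\<^sub>M lborel :: ('b \<times> 'a) measure) = sets borel"
      by (metis lborel_prod sets_lborel)
  qed (auto simp: lborel_prod)
  finally show ?thesis
    by (simp add: lborel_preserving_def lborel_prod borel_measurable_continuous_onI continuous_intros)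
qed

lemma lborel_preserving_map_fst:
  fixes \<rho> :: "'a::euclidean_space \<Rightarrow> 'c::euclidean_space"
  assumes "lborel_preserving \<rho>"
  shows "lborel_preserving (\<lambda>q::'a \<times> 'b::euclidean_space. (\<rho> (fst q), snd q))"
proof -
  have [measurable]: "\<rho> \<in> borel_measurable borel"
    using assms by (simp add: lborel_preserving_def)
  have "(\<lambda>q::'a \<times> 'b. (\<rho> (fst q), snd q)) \<in> borel \<Otimes>\<^sub>M borel \<rightarrow>\<^sub>M borel \<Otimes>\<^sub>M borel"
    by measurable
  then have meas: "(\<lambda>q::'a \<times> 'b. (\<rho> (fst q), snd q)) \<in> borel_measurable borel"
    by (simp add: borel_prod)
  have id: "distr lborel borel (\<lambda>x::'b. x) = lborel"
    by (rule distr_id2) simp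
  have "distr lborel borel \<rho> \<Otimes>\<^sub>M distr lborel borel (\<lambda>x::'b. x)
      = distr (lborel \<Otimes>\<^sub>M lborel) (borel \<Otimes>\<^sub>M borel) (\<lambda>(x, y). (\<rho> x, y))"
    by (rule pair_measure_distr) (auto simp: id intro: lborel.sigma_finite_measure_axioms)
  also have "\<dots> = distr lborel borel (\<lambda>q::'a \<times> 'b. (\<rho> (fst q), snd q))"
    proof (rule distr_cong)
    show "sets (borel \<Otimes>\<^sub>M borel :: ('c \<times> 'b) measure) = sets borel"
      by (metis borel_prod)
  qed (auto simp: lborel_prod)
  finally show ?thesis
    using meas assms id by (simp add: lborel_preserving_def lborel_prod)
qed

lemma lborel_preserving_Complex: "lborel_preserving (\<lambda>q. Complex (fst q) (snd q))"
proof -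
  have meas: "(\<lambda>q. Complex (fst q) (snd q)) \<in> borel_measurable borel"
    unfolding Complex_eq by (intro borel_measurable_continuous_onI continuous_intros)
  have "distr lborel borel (\<lambda>q. Complex (fst q) (snd q)) = lborel"
  proof (rule lborel_eqI[symmetric])
    fix l u :: complex
    assume le: "\<And>b. b \<in> Basis \<Longrightarrow> l \<bullet> b \<le> u \<bullet> b"
    have "(\<lambda>q. Complex (fst q) (snd q)) -` box l u = box (Re l, Im l) (Re u, Im u)"
      by (auto simp: box_def Basis_complex_def Basis_prod_def inner_complex_def)
    then have "emeasure (distr lborel borel (\<lambda>q. Complex (fst q) (snd q))) (box l u)
        = emeasure lborel (box (Re l, Im l) (Re u, Im u))"
      using meas by (simp add: emeasure_distr)
    also have "\<dots> = (\<Prod>b\<in>Basis. (u - l) \<bullet> b)"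
      using le[of 1] le[of \<i>]
      by (simp add: emeasure_lborel_box_eq Basis_prod_def Basis_complex_def inner_complex_def
          box_eq_empty prod.union_disjoint ennreal_mult inner_prod_def mult.commute)
    finally show "emeasure (distr lborel borel (\<lambda>q. Complex (fst q) (snd q))) (box l u)
        = (\<Prod>b\<in>Basis. (u - l) \<bullet> b)" .
  qed simp
  with meas show ?thesis
    by (simp add: lborel_preserving_def)
qed

lemma lborel_preserving_shear_fst:
  "lborel_preserving (\<lambda>q::real \<times> real. (fst q + c * snd q, snd q))"
proof -
  have "lborel_preserving ((\<lambda>q::real \<times> real. (snd q, fst q))
      \<circ> (\<lambda>q. (fst q, c * fst q + snd q)) \<circ> (\<lambda>q. (snd q, fst q)))"
    by (intro lborel_preserving_comp lborel_preserving_swap lborel_preserving_shear continuous_intros)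
  then show ?thesis
    by (simp add: comp_def add.commute)
qed

lemma lborel_preserving_rotation:
  fixes a b :: real
  assumes "a\<^sup>2 + b\<^sup>2 = 1" "b \<noteq> 0"
  shows "lborel_preserving (\<lambda>q::real \<times> real. (a * fst q - b * snd q, b * fst q + a * snd q))"
proof -
  define \<tau> where "\<tau> = (1 - a) / b"
  have e1: "1 - \<tau> * b = a"
    using assms by (simp add: \<tau>_def)
  have "\<tau> * (1 + a) = (1 - a\<^sup>2) / b"
    by (simp add: \<tau>_def power2_eq_square algebra_simps)
  also have "\<dots> = b"
    using assms by (simp add: field_simps power2_eq_square)
  finally have e2: "\<tau> * (1 + a) = b" .
  have "lborel_preserving ((\<lambda>q::real \<times> real. (fst q + (- \<tau>) * snd q, snd q))
      \<circ> (\<lambda>q. (fst q, b * fst q + snd q)) \<circ> (\<lambda>q. (fst q + (- \<tau>) * snd q, snd q)))"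
    by (intro lborel_preserving_comp lborel_preserving_shear_fst lborel_preserving_shear continuous_intros)
  moreover have "((\<lambda>q::real \<times> real. (fst q + (- \<tau>) * snd q, snd q))
      \<circ> (\<lambda>q. (fst q, b * fst q + snd q)) \<circ> (\<lambda>q. (fst q + (- \<tau>) * snd q, snd q)))
      = (\<lambda>q. (a * fst q - b * snd q, b * fst q + a * snd q))"
  proof
    fix q :: "real \<times> real"
    obtain x y where q: "q = (x, y)"
      by (cases q)
    have "x + - \<tau> * y + - \<tau> * (b * (x + - \<tau> * y) + y) = x * (1 - \<tau> * b) - y * (\<tau> * (1 + (1 - \<tau> * b)))"
      "b * (x + - \<tau> * y) + y = b * x + (1 - \<tau> * b) * y"
      by (simp_all add: algebra_simps)
    then show "((\<lambda>q::real \<times> real. (fst q + (- \<tau>) * snd q, snd q))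
        \<circ> (\<lambda>q. (fst q, b * fst q + snd q)) \<circ> (\<lambda>q. (fst q + (- \<tau>) * snd q, snd q))) q
        = (a * fst q - b * snd q, b * fst q + a * snd q)"
      unfolding q by (simp only: comp_def fst_conv snd_conv e1 e2 mult.commute)
  qed
  ultimately show ?thesis
    by simp
qed

lemma lborel_preserving_mult_unimodular:
  fixes c :: complex
  assumes "cmod c = 1"
  shows "lborel_preserving (\<lambda>z. c * z)"
proof -
  have rotation: "lborel_preserving (\<lambda>z. c * z)" if c: "cmod c = 1" "Im c \<noteq> 0" for c :: complex
  proof -
    define \<Phi> where "\<Phi> = (\<lambda>q::real \<times> real. Complex (fst q) (snd q))"
    define \<rho> where "\<rho> = (\<lambda>q::real \<times> real. (Re c * fst q - Im c * snd q, Im c * fst q + Re c * snd q))"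
    have "(Re c)\<^sup>2 + (Im c)\<^sup>2 = 1"
      using c cmod_power2[of c] by simp
    then have "lborel_preserving (\<Phi> \<circ> \<rho>)"
      unfolding \<rho>_def \<Phi>_def using c(2)
      by (intro lborel_preserving_comp lborel_preserving_rotation lborel_preserving_Complex)
    moreover have "\<Phi> \<circ> \<rho> = (\<lambda>z. c * z) \<circ> \<Phi>"
      by (auto simp: \<Phi>_def \<rho>_def complex_eq_iff)
    ultimately have "distr lborel borel ((\<lambda>z. c * z) \<circ> \<Phi>) = lborel"
      by (simp add: lborel_preserving_def)
    moreover have "\<Phi> \<in> borel_measurable borel" "distr lborel borel \<Phi> = lborel"
      using lborel_preserving_Complex by (simp_all add: \<Phi>_def lborel_preserving_def)
    moreover have "(\<lambda>z. c * z) \<in> borel_measurable borel"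
      by (intro borel_measurable_continuous_onI continuous_intros)
    ultimately show ?thesis
      by (simp add: lborel_preserving_def distr_distr[symmetric])
  qed
  show ?thesis
  proof (cases "Im c = 0")
    case True
    with assms have "\<bar>Re c\<bar> = 1"
      by (simp add: cmod_eq_Re)
    with True have "c = 1 \<or> c = - 1"
      by (auto simp: complex_eq_iff abs_if split: if_splits)
    moreover have "lborel_preserving (\<lambda>z::complex. - z)"
      using lborel_preserving_comp[OF rotation rotation, of \<i> \<i>] by (simp add: comp_def)
    ultimately show ?thesis
      using lborel_preserving_id by auto
  qed (use assms rotation in auto)
qed

lemma lborel_integral_eq_0_by_averaging:
  fixes F :: "'a::euclidean_space \<Rightarrow> 'b::{banach, second_countable_topology}"
  assumes "finite I" "I \<noteq> {}"
    and T: "\<And>i. i \<in> I \<Longrightarrow> lborel_preserving (T i)"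
    and F: "integrable lborel F"
    and sum_zero: "\<And>x. (\<Sum>i\<in>I. F (T i x)) = 0"
  shows "(\<integral>x. F x \<partial>lborel) = 0"
proof -
  have F_meas: "F \<in> borel_measurable borel"
    using borel_measurable_integrable[OF F] by simp
  have "0 = (\<integral>x. (\<Sum>i\<in>I. F (T i x)) \<partial>lborel)"
    by (simp add: sum_zero)
  also have "\<dots> = (\<Sum>i\<in>I. \<integral>x. F (T i x) \<partial>lborel)"
    by (rule Bochner_Integration.integral_sum) (use T F lborel_preserving_integrable in blast)
  also have "\<dots> = (\<Sum>i\<in>I. \<integral>x. F x \<partial>lborel)"
    using T F_meas by (intro sum.cong lborel_preserving_integral) auto
  also have "\<dots> = real (card I) *\<^sub>R (\<integral>x. F x \<partial>lborel)"
    by (rule sum_constant_scaleR)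
  finally have "real (card I) *\<^sub>R (\<integral>x. F x \<partial>lborel) = 0" ..
  with assms(1,2) show ?thesis
    by simp
qed

section \<open>Gauge balls and the mean value property\<close>

lemma heis_mult_0 [simp]: "heis_mult 0 q = q"
  by (simp add: heis_mult_def)

lemma heis_inv_0 [simp]: "heis_inv 0 = 0"
  by (simp add: heis_inv_def zero_prod_def)

lemma heis_mult_inv_left: "heis_mult (heis_inv p) (heis_mult p q) = q"
proof -
  have "Im (- fst p * cnj (fst p + fst q)) = - Im (fst p * cnj (fst q))"
    by (simp add: algebra_simps)
  then show ?thesis
    by (simp add: heis_mult_def heis_inv_def prod_eq_iff)
qed

lemma heis_mult_inv_right: "heis_mult p (heis_mult (heis_inv p) q) = q"
  by (simp add: heis_mult_def heis_inv_def prod_eq_iff algebra_simps)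

lemma lborel_preserving_heis_mult: "lborel_preserving (heis_mult p)"
proof -
  have "lborel_preserving ((+) p \<circ> (\<lambda>q::complex \<times> real. (fst q, 2 * Im (fst p * cnj (fst q)) + snd q)))"
    by (intro lborel_preserving_comp lborel_preserving_translation lborel_preserving_shear
        continuous_intros)
  also have "(+) p \<circ> (\<lambda>q::complex \<times> real. (fst q, 2 * Im (fst p * cnj (fst q)) + snd q)) = heis_mult p"
    by (auto simp: heis_mult_def fun_eq_iff prod_eq_iff)
  finally show ?thesis .
qed

lemma heis_gauge_pow4: "heis_gauge q ^ 4 = cmod (fst q) ^ 4 + (snd q)\<^sup>2"
  unfolding heis_gauge_def
  by (cases "cmod (fst q) ^ 4 + (snd q)\<^sup>2 = 0") (simp_all add: powr_power)

lemma heis_gauge_nonneg: "0 \<le> heis_gauge q"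
  by (simp add: heis_gauge_def)

lemma heis_gauge_mult_unimodular: "cmod c = 1 \<Longrightarrow> heis_gauge (c * z, t) = heis_gauge (z, t)"
  by (simp add: heis_gauge_def norm_mult)

lemma heis_gauge_reflect: "heis_gauge (z, - t) = heis_gauge (z, t)"
  by (simp add: heis_gauge_def)

lemma heis_ball_eq_vimage: "heis_ball p R = heis_mult (heis_inv p) -` heis_ball 0 R"
  by (simp add: heis_ball_def)

lemma heis_ball_0_eq:
  assumes "0 \<le> R"
  shows "heis_ball 0 R = {q. cmod (fst q) ^ 4 + (snd q)\<^sup>2 \<le> R ^ 4}"
proof -
  have "heis_gauge q \<le> R \<longleftrightarrow> heis_gauge q ^ 4 \<le> R ^ 4" for q
    using assms heis_gauge_nonneg[of q] by (simp add: power_mono_iff)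
  then show ?thesis
    by (simp add: heis_ball_def heis_gauge_pow4)
qed

lemma compact_heis_ball_0:
  assumes "0 \<le> R"
  shows "compact (heis_ball 0 R)"
proof -
  have "norm q \<le> R + R\<^sup>2" if "q \<in> heis_ball 0 R" for q
  proof -
    have q: "cmod (fst q) ^ 4 + (snd q)\<^sup>2 \<le> R ^ 4"
      using that assms by (simp add: heis_ball_0_eq)
    have "0 \<le> cmod (fst q) ^ 4" "0 \<le> (snd q)\<^sup>2" "R ^ 4 = (R\<^sup>2)\<^sup>2"
      by (simp_all flip: power_mult)
    with q have z: "cmod (fst q) ^ 4 \<le> R ^ 4" and t: "(snd q)\<^sup>2 \<le> (R\<^sup>2)\<^sup>2"
      by linarith+
    from z assms have "cmod (fst q) \<le> R"
      by (simp add: power_mono_iff)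
    moreover from t have "\<bar>snd q\<bar> \<le> R\<^sup>2"
      using power2_le_iff_abs_le[of "R\<^sup>2" "snd q"] by simp
    ultimately show ?thesis
      using norm_Pair_le[of "fst q" "snd q"] by simp
  qed
  then have "bounded (heis_ball 0 R)"
    unfolding bounded_iff by blast
  moreover have "closed (heis_ball 0 R)"
    unfolding heis_ball_0_eq[OF assms] by (intro closed_Collect_le continuous_intros)
  ultimately show ?thesis
    by (simp add: compact_eq_bounded_closed)
qed

lemma measure_heis_ball_0_pos:
  assumes "0 < R"
  shows "0 < measure lborel (heis_ball 0 R)"
proof -
  define r where "r = min (R / 2) (R\<^sup>2 / 2)"
  have r: "0 < r"
    using assms by (simp add: r_def)
  have "ball 0 r \<subseteq> heis_ball 0 R"
  proof
    fix q :: "complex \<times> real"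
    assume "q \<in> ball 0 r"
    then have "norm (fst q) < r" "norm (snd q) < r"
      using norm_fst_le[of "fst q" "snd q"] norm_snd_le[of "snd q" "fst q"] by auto
    then have "cmod (fst q) ^ 4 \<le> (R / 2) ^ 4" "(snd q)\<^sup>2 \<le> (R\<^sup>2 / 2)\<^sup>2"
      by (auto simp: r_def power2_le_iff_abs_le intro!: power_mono)
    then have "cmod (fst q) ^ 4 + (snd q)\<^sup>2 \<le> (R / 2) ^ 4 + (R\<^sup>2 / 2)\<^sup>2"
      by (rule add_mono)
    also have "(R / 2) ^ 4 + (R\<^sup>2 / 2)\<^sup>2 \<le> R ^ 4"
      using assms by (simp add: power_divide flip: power_mult)
    finally show "q \<in> heis_ball 0 R"
      using assms by (simp add: heis_ball_0_eq)
  qed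
  moreover have "heis_ball 0 R \<in> fmeasurable lborel"
    using compact_heis_ball_0 assms by (simp add: fmeasurable_compact)
  ultimately have "measure lborel (ball (0::complex \<times> real) r) \<le> measure lborel (heis_ball 0 R)"
    by (intro measure_mono_fmeasurable) auto
  with content_ball_pos[OF r, where c = "0 :: complex \<times> real"] show ?thesis
    by linarith
qed

lemma continuous_on_heis_mult: "continuous_on S (heis_mult p)"
  unfolding heis_mult_def by (intro continuous_intros)

lemma borel_heis_ball_0: "0 \<le> R \<Longrightarrow> heis_ball 0 R \<in> sets borel"
  by (simp add: borel_compact compact_heis_ball_0)

lemma borel_heis_ball: "0 \<le> R \<Longrightarrow> heis_ball p R \<in> sets borel"
  unfolding heis_ball_eq_vimage[of p]
  using lborel_preserving_heis_mult[of "heis_inv p"] borel_heis_ball_0[of R]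
  by (intro measurable_sets_borel) (auto simp: lborel_preserving_def)

lemma measure_heis_ball:
  assumes "0 \<le> R"
  shows "measure lebesgue (heis_ball p R) = measure lborel (heis_ball 0 R)"
proof -
  have B: "heis_ball p R \<in> sets borel"
    using assms by (rule borel_heis_ball)
  have "measure lebesgue (heis_ball p R) = measure lborel (heis_ball p R)"
    using B by (simp add: measure_completion)
  also have "\<dots> = measure lborel (heis_mult p -` heis_ball p R)"
    using lborel_preserving_measure_vimage[OF lborel_preserving_heis_mult B] by simp
  also have "heis_mult p -` heis_ball p R = heis_ball 0 R"
    by (simp add: heis_ball_eq_vimage[of p] vimage_def heis_mult_inv_left)
  finally show ?thesis .
qed

lemma integral_heis_ball:
  fixes f :: "complex \<times> real \<Rightarrow> 'b::euclidean_space"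
  assumes f: "continuous_on UNIV f" and "0 \<le> R"
  shows "f integrable_on heis_ball p R"
    and "integral (heis_ball p R) f = (\<integral>q. indicator (heis_ball 0 R) q *\<^sub>R f (heis_mult p q) \<partial>lborel)"
proof -
  define G where "G x = indicator (heis_ball p R) x *\<^sub>R f x" for x
  have G_translate: "G (heis_mult p q) = indicator (heis_ball 0 R) q *\<^sub>R f (heis_mult p q)" for q
    by (simp add: G_def heis_ball_eq_vimage[of p] heis_mult_inv_left indicator_def)
  have "integrable lborel (\<lambda>q. indicator (heis_ball 0 R) q *\<^sub>R f (heis_mult p q))"
    using assms by (intro borel_integrable_compact compact_heis_ball_0 continuous_on_compose2[OF f]
        continuous_on_heis_mult) auto
  then have "integrable lborel (\<lambda>x. G (heis_mult p (heis_mult (heis_inv p) x)))"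
    unfolding G_translate by (rule lborel_preserving_integrable[OF lborel_preserving_heis_mult])
  then have G: "set_integrable lborel (heis_ball p R) f"
    by (simp add: set_integrable_def heis_mult_inv_right G_def)
  then show "f integrable_on heis_ball p R"
    by (rule set_borel_integral_eq_integral)
  have "integral (heis_ball p R) f = (\<integral>x. G x \<partial>lborel)"
    using set_borel_integral_eq_integral(2)[OF G] by (simp add: set_lebesgue_integral_def G_def)
  also have "\<dots> = (\<integral>q. G (heis_mult p q) \<partial>lborel)"
    using G borel_measurable_integrable
    by (intro lborel_preserving_integral[symmetric] lborel_preserving_heis_mult)
      (auto simp: set_integrable_def G_def)
  finally show "integral (heis_ball p R) f
      = (\<integral>q. indicator (heis_ball 0 R) q *\<^sub>R f (heis_mult p q) \<partial>lborel)"
    by (simp add: G_translate)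
qed

lemma strongly_harmonicI_centered_integral:
  assumes f: "continuous_on UNIV f"
    and centered: "\<And>p R. 0 < R \<Longrightarrow>
      (\<integral>q. indicator (heis_ball 0 R) q *\<^sub>R (f (heis_mult p q) - f p) \<partial>lborel) = 0"
  shows "strongly_harmonic f"
  unfolding strongly_harmonic_def
proof (intro allI impI conjI)
  fix p and R :: real
  assume R: "0 < R"
  then show "f integrable_on heis_ball p R"
    using integral_heis_ball(1)[OF f] by simp
  have B: "heis_ball 0 R \<in> sets lborel"
    using R by (simp add: borel_heis_ball_0)
  have B_finite: "emeasure lborel (heis_ball 0 R) < \<infinity>"
    using R by (intro emeasure_bounded_finite compact_imp_bounded compact_heis_ball_0) simp
  have "integrable lborel (\<lambda>q. indicator (heis_ball 0 R) q *\<^sub>R (f (heis_mult p q) - f p))"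
    using R by (intro borel_integrable_compact compact_heis_ball_0 continuous_intros
        continuous_on_compose2[OF f] continuous_on_heis_mult) auto
  moreover have "integrable lborel (\<lambda>q. indicator (heis_ball 0 R) q *\<^sub>R f p)"
    using B B_finite by (rule integrable_indicator)
  ultimately have "(\<integral>q. indicator (heis_ball 0 R) q *\<^sub>R (f (heis_mult p q) - f p) \<partial>lborel)
      + (\<integral>q. indicator (heis_ball 0 R) q *\<^sub>R f p \<partial>lborel)
      = (\<integral>q. indicator (heis_ball 0 R) q *\<^sub>R f (heis_mult p q) \<partial>lborel)"
    by (simp add: Bochner_Integration.integral_add[symmetric] scaleR_diff_right)
  then have "(\<integral>q. indicator (heis_ball 0 R) q *\<^sub>R f (heis_mult p q) \<partial>lborel)
      = (\<integral>q. indicator (heis_ball 0 R) q *\<^sub>R f p \<partial>lborel)"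
    by (simp add: centered[OF R])
  also have "\<dots> = measure lborel (heis_ball 0 R) *\<^sub>R f p"
    using B B_finite by (simp add: integral_indicator)
  finally have "integral (heis_ball p R) f = measure lebesgue (heis_ball p R) *\<^sub>R f p"
    using R by (simp add: integral_heis_ball(2)[OF f] measure_heis_ball)
  moreover have "0 < measure lebesgue (heis_ball p R)"
    using R by (simp add: measure_heis_ball measure_heis_ball_0_pos)
  ultimately show "f p = integral (heis_ball p R) f / complex_of_real (measure lebesgue (heis_ball p R))"
    by (simp add: scaleR_conv_of_real)
qed

lemma strongly_harmonic_cnj:
  assumes "strongly_harmonic f"
  shows "strongly_harmonic (\<lambda>q. cnj (f q))"
  unfolding strongly_harmonic_def
proof (intro allI impI conjI)
  fix p and R :: real
  assume "0 < R"
  with assms have f: "f integrable_on heis_ball p R"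
    and mean: "f p = integral (heis_ball p R) f / complex_of_real (measure lebesgue (heis_ball p R))"
    unfolding strongly_harmonic_def by blast+
  from f show "(\<lambda>q. cnj (f q)) integrable_on heis_ball p R"
    by (simp add: integrable_on_cnj_iff)
  from mean show "cnj (f p) = integral (heis_ball p R) (\<lambda>q. cnj (f q))
      / complex_of_real (measure lebesgue (heis_ball p R))"
    by (simp add: integral_cnj)
qed

section \<open>Roots of unity\<close>

definition root_of_unity :: "nat \<Rightarrow> complex" where
  "root_of_unity N = exp (2 * of_real pi * \<i> / of_nat N)"

lemma root_of_unity_pow: "root_of_unity N ^ m = exp (2 * of_real pi * \<i> * of_nat m / of_nat N)"
  unfolding root_of_unity_def exp_of_nat_mult[symmetric] by (simp add: mult_ac)

lemma root_of_unity_pow_eq_1_iff: "1 \<le> N \<Longrightarrow> root_of_unity N ^ m = 1 \<longleftrightarrow> N dvd m"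
  unfolding root_of_unity_pow by (rule complex_root_unity_eq_1)

lemma norm_root_of_unity_pow: "cmod (root_of_unity N ^ l) = 1"
proof -
  have "root_of_unity N = exp (\<i> * complex_of_real (2 * pi / real N))"
    unfolding root_of_unity_def by (simp add: field_simps)
  then show ?thesis
    by (simp add: norm_power)
qed

lemma cnj_root_of_unity_pow:
  assumes "1 \<le> N"
  shows "cnj (root_of_unity N ^ l) = (root_of_unity N ^ l) ^ (N - 1)"
proof -
  let ?\<zeta> = "root_of_unity N ^ l"
  have "?\<zeta> ^ N = 1"
    using assms by (simp add: root_of_unity_pow_eq_1_iff flip: power_mult)
  then have "?\<zeta> * ?\<zeta> ^ (N - 1) = 1"
    using assms by (cases N) simp_all
  moreover have "cnj ?\<zeta> * ?\<zeta> = 1"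
    using complex_norm_square[of ?\<zeta>] by (simp add: norm_root_of_unity_pow mult.commute)
  ultimately show ?thesis
    by (metis mult.assoc mult.commute mult_1)
qed

lemma sum_root_of_unity_powers:
  assumes "1 \<le> N"
  shows "(\<Sum>l<N. (root_of_unity N ^ m) ^ l) = (if N dvd m then of_nat N else 0)"
proof (cases "N dvd m")
  case True
  with assms have "root_of_unity N ^ m = 1"
    by (simp add: root_of_unity_pow_eq_1_iff)
  with True show ?thesis
    by simp
next
  case False
  have "(root_of_unity N ^ m) ^ N = 1"
    using assms by (simp add: root_of_unity_pow_eq_1_iff flip: power_mult)
  with False assms show ?thesis
    by (simp add: geometric_sum root_of_unity_pow_eq_1_iff)
qed

lemma root_of_unity_filter:
  assumes "1 \<le> N"
  shows "(\<Sum>l<N. (root_of_unity N ^ l) ^ m * (w + root_of_unity N ^ l * z) ^ k)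
    = of_nat N * (\<Sum>j\<le>k. if N dvd (m + j) then of_nat (k choose j) * z ^ j * w ^ (k - j) else 0)"
proof -
  let ?\<zeta> = "root_of_unity N"
  have "(?\<zeta> ^ l) ^ m * (w + ?\<zeta> ^ l * z) ^ k
      = (\<Sum>j\<le>k. of_nat (k choose j) * z ^ j * w ^ (k - j) * (?\<zeta> ^ (m + j)) ^ l)" for l
  proof -
    have binomial: "(w + ?\<zeta> ^ l * z) ^ k = (\<Sum>j\<le>k. of_nat (k choose j) * (?\<zeta> ^ l * z) ^ j * w ^ (k - j))"
      by (subst add.commute) (rule binomial_ring)
    have "(?\<zeta> ^ l) ^ m * (of_nat (k choose j) * (?\<zeta> ^ l * z) ^ j * w ^ (k - j))
        = of_nat (k choose j) * z ^ j * w ^ (k - j) * (?\<zeta> ^ (m + j)) ^ l" for j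
      by (simp add: power_mult_distrib power_add mult_ac flip: power_mult)
    then show ?thesis
      by (simp only: binomial sum_distrib_left)
  qed
  then have "(\<Sum>l<N. (?\<zeta> ^ l) ^ m * (w + ?\<zeta> ^ l * z) ^ k)
      = (\<Sum>j\<le>k. of_nat (k choose j) * z ^ j * w ^ (k - j) * (\<Sum>l<N. (?\<zeta> ^ (m + j)) ^ l))"
    by (simp add: sum.swap[of _ "{..<N}"] sum_distrib_left)
  also have "\<dots> = of_nat N * (\<Sum>j\<le>k. if N dvd (m + j) then of_nat (k choose j) * z ^ j * w ^ (k - j) else 0)"
    using assms by (simp add: sum_root_of_unity_powers sum_distrib_left mult.commute if_distrib cong: if_cong)
  finally show ?thesis .
qed

lemma root_of_unity_filter_single:
  assumes "1 \<le> N" and single: "\<And>j. j \<le> k \<Longrightarrow> N dvd (m + j) \<longleftrightarrow> j = j\<^sub>0"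
  shows "(\<Sum>l<N. (root_of_unity N ^ l) ^ m * (w + root_of_unity N ^ l * z) ^ k)
    = (if j\<^sub>0 \<le> k then of_nat N * of_nat (k choose j\<^sub>0) * z ^ j\<^sub>0 * w ^ (k - j\<^sub>0) else 0)"
proof -
  have "(\<Sum>j\<le>k. if N dvd (m + j) then of_nat (k choose j) * z ^ j * w ^ (k - j) else 0)
      = (\<Sum>j\<le>k. if j = j\<^sub>0 then of_nat (k choose j) * z ^ j * w ^ (k - j) else (0::complex))"
    using single by (intro sum.cong) auto
  with assms(1) show ?thesis
    by (simp add: root_of_unity_filter sum.delta mult.assoc)
qed

lemma dvd_less_double_imp_eq: "(N::nat) dvd x \<Longrightarrow> 0 < x \<Longrightarrow> x < 2 * N \<Longrightarrow> x = N"
  by (auto elim!: dvdE simp: less_2_cases_iff)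

lemma root_of_unity_binomial_averages:
  fixes w z :: complex
  assumes N: "k + 2 \<le> N"
  defines "\<zeta> \<equiv> \<lambda>l. root_of_unity N ^ l"
  shows "(\<Sum>l<N. (w + \<zeta> l * z) ^ k) = of_nat N * w ^ k"
    and "(\<Sum>l<N. \<zeta> l * (w + \<zeta> l * z) ^ k) = 0"
    and "(\<Sum>l<N. cnj (\<zeta> l) * (w + \<zeta> l * z) ^ k) = of_nat N * of_nat k * z * w ^ (k - 1)"
proof -
  have N1: "1 \<le> N"
    using N by simp
  have dvd0: "N dvd (0 + j) \<longleftrightarrow> j = 0" and dvd1: "N dvd (1 + j) \<longleftrightarrow> j = N - 1"
    if "j \<le> k" for j
    using that N by (auto dest: dvd_imp_le)
  have dvdN: "N dvd (N - 1 + j) \<longleftrightarrow> j = 1" if "j \<le> k" for j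
  proof (cases "j = 0")
    case True
    from N have "\<not> N dvd (N - 1)"
      by (intro nat_dvd_not_less) auto
    with True show ?thesis
      by simp
  next
    case False
    with that N have "0 < N - 1 + j" "N - 1 + j < 2 * N"
      by linarith+
    then show ?thesis
      using N dvd_less_double_imp_eq[of N "N - 1 + j"] by (auto simp del: One_nat_def)
  qed
  show "(\<Sum>l<N. (w + \<zeta> l * z) ^ k) = of_nat N * w ^ k"
    using root_of_unity_filter_single[of N k 0 0 w z, OF N1 dvd0] by (simp add: \<zeta>_def)
  show "(\<Sum>l<N. \<zeta> l * (w + \<zeta> l * z) ^ k) = 0"
    using root_of_unity_filter_single[of N k 1 "N - 1" w z, OF N1 dvd1] N by (simp add: \<zeta>_def)
  show "(\<Sum>l<N. cnj (\<zeta> l) * (w + \<zeta> l * z) ^ k) = of_nat N * of_nat k * z * w ^ (k - 1)"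
    unfolding \<zeta>_def cnj_root_of_unity_pow[OF N1]
    using root_of_unity_filter_single[of N k "N - 1" 1 w z, OF N1 dvdN] by (cases k) simp_all
qed

section \<open>The polynomials\<close>

lemma heisP_heis_mult_reflect:
  fixes w v :: complex
  shows "heisP k (heis_mult (w, s) (v, t)) + heisP k (heis_mult (w, s) (v, - t))
    = 2 * ((of_real ((1 + real k) * s) + \<i> * of_nat k * (w * cnj w + v * cnj v)) * (w + v) ^ k
        - \<i> * w * cnj v * (w + v) ^ k + \<i> * (1 + 2 * of_nat k) * cnj w * v * (w + v) ^ k)"
proof -
  have Im: "complex_of_real (Im x) = (x - cnj x) / (2 * \<i>)" for x :: complex
    by (simp add: complex_eq_iff)
  have expand: "heisP k (heis_mult (w, s) (v, t))
      = (of_real (1 + real k) * (of_real s + of_real t + 2 * ((w * cnj v - cnj w * v) / (2 * \<i>)))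
        + \<i> * (of_nat k * ((w + v) * (cnj w + cnj v)))) * (w + v) ^ k" for t
    unfolding heisP_def heis_mult_def fst_conv snd_conv
    by (simp only: of_real_mult of_real_add Im complex_norm_square complex_cnj_mult complex_cnj_cnj
        complex_cnj_add of_real_numeral of_real_of_nat_eq)
  show ?thesis
    unfolding expand by (simp add: field_simps)
qed


lemma heisP_rotation_reflection_average:
  assumes N: "k + 2 \<le> N"
  shows "(\<Sum>l<N. heisP k (heis_mult p (root_of_unity N ^ l * z, t))
      + heisP k (heis_mult p (root_of_unity N ^ l * z, - t))) = 2 * of_nat N * heisP k p"
proof -
  obtain w s where p: "p = (w, s)"
    by (cases p)
  define \<zeta> where "\<zeta> l = root_of_unity N ^ l" for l
  define A where "A = of_real ((1 + real k) * s) + \<i> * of_nat k * (w * cnj w + z * cnj z)"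
  have "heisP k (heis_mult p (\<zeta> l * z, t)) + heisP k (heis_mult p (\<zeta> l * z, - t))
      = 2 * (A * (w + \<zeta> l * z) ^ k
        - \<i> * w * cnj z * (cnj (\<zeta> l) * (w + \<zeta> l * z) ^ k)
        + \<i> * (1 + 2 * of_nat k) * cnj w * z * (\<zeta> l * (w + \<zeta> l * z) ^ k))" for l
  proof -
    have "\<zeta> l * cnj (\<zeta> l) = 1"
      using complex_norm_square[of "\<zeta> l"] by (simp add: \<zeta>_def norm_root_of_unity_pow)
    then show ?thesis
      unfolding p heisP_heis_mult_reflect A_def by (simp add: algebra_simps)
  qed
  then have "(\<Sum>l<N. heisP k (heis_mult p (\<zeta> l * z, t)) + heisP k (heis_mult p (\<zeta> l * z, - t)))
      = 2 * (A * (of_nat N * w ^ k) - \<i> * w * cnj z * (of_nat N * of_nat k * z * w ^ (k - 1))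
        + \<i> * (1 + 2 * of_nat k) * cnj w * z * 0)"
    using root_of_unity_binomial_averages[OF N, of w z, folded \<zeta>_def]
    by (simp only: sum.distrib sum_subtractf flip: sum_distrib_left)
  also have "\<dots> = 2 * of_nat N * (A * w ^ k - \<i> * of_nat k * z * cnj z * (w * w ^ (k - 1)))"
    by (simp add: algebra_simps)
  also have "\<dots> = 2 * of_nat N * heisP k p"
  proof -
    have "heisP k p = (of_real ((1 + real k) * s) + \<i> * of_nat k * (w * cnj w)) * w ^ k"
      unfolding p heisP_def
      by (simp only: fst_conv snd_conv complex_norm_square of_real_mult of_real_of_nat_eq mult.assoc)
    then show ?thesis
      by (cases k) (simp_all add: A_def algebra_simps)
  qed
  finally show ?thesis
    by (simp add: \<zeta>_def)
qed

lemma continuous_on_heisP: "continuous_on S (heisP k)"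
  unfolding heisP_def by (intro continuous_intros)

lemma heisP_centered_integral_eq_0:
  assumes "0 < R"
  shows "(\<integral>q. indicator (heis_ball 0 R) q *\<^sub>R (heisP k (heis_mult p q) - heisP k p) \<partial>lborel) = 0"
proof -
  define N where "N = k + 2"
  define T where "T = (\<lambda>(l, b) (q :: complex \<times> real).
    (root_of_unity N ^ l * fst q, if b then snd q else - snd q))"
  define F where "F q = indicator (heis_ball 0 R) q *\<^sub>R (heisP k (heis_mult p q) - heisP k p)" for q
  have "(\<integral>q. F q \<partial>lborel) = 0"
  proof (rule lborel_integral_eq_0_by_averaging[where I = "{..<N} \<times> UNIV" and T = T])
    fix i :: "nat \<times> bool"
    obtain l b where i: "i = (l, b)"
      by (cases i)
    have rotation: "lborel_preserving (\<lambda>q::complex \<times> real. (root_of_unity N ^ l * fst q, snd q))"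
      by (intro lborel_preserving_map_fst lborel_preserving_mult_unimodular norm_root_of_unity_pow)
    show "lborel_preserving (T i)"
    proof (cases b)
      case True
      with rotation show ?thesis
        by (simp add: T_def i)
    next
      case False
      with lborel_preserving_comp[OF rotation lborel_preserving_reflect_snd] show ?thesis
        by (simp add: T_def i comp_def)
    qed
  next
    show "integrable lborel F"
      unfolding F_def using assms
      by (intro borel_integrable_compact compact_heis_ball_0 continuous_intros
          continuous_on_compose2[OF continuous_on_heisP continuous_on_heis_mult]) auto
  next
    fix q :: "complex \<times> real"
    obtain z t where q: "q = (z, t)"
      by (cases q)
    have "F (T (l, b) q) = indicator (heis_ball 0 R) q *\<^sub>R
        (heisP k (heis_mult p (root_of_unity N ^ l * z, if b then t else - t)) - heisP k p)" for l b
      by (simp add: F_def T_def q heis_ball_def heis_gauge_mult_unimodular heis_gauge_reflect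
          norm_root_of_unity_pow indicator_def)
    then have "(\<Sum>i\<in>{..<N} \<times> UNIV. F (T i q)) = indicator (heis_ball 0 R) q *\<^sub>R
        ((\<Sum>l<N. heisP k (heis_mult p (root_of_unity N ^ l * z, t))
          + heisP k (heis_mult p (root_of_unity N ^ l * z, - t))) - of_nat N * (2 * heisP k p))"
      by (simp add: sum.cartesian_product' UNIV_bool sum.distrib sum_subtractf
          scaleR_right_diff_distrib scaleR_sum_right)
    moreover have "(\<Sum>l<N. heisP k (heis_mult p (root_of_unity N ^ l * z, t))
        + heisP k (heis_mult p (root_of_unity N ^ l * z, - t))) = 2 * of_nat N * heisP k p"
      by (rule heisP_rotation_reflection_average) (simp add: N_def)
    ultimately show "(\<Sum>i\<in>{..<N} \<times> UNIV. F (T i q)) = 0"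
      by simp
  qed (auto simp: N_def)
  then show ?thesis
    by (simp add: F_def)
qed

lemma heisPt_eq_cnj_heisP: "heisPt k = (\<lambda>q. cnj (heisP k q))"
  by (simp add: fun_eq_iff heisPt_def heisP_def)

theorem mainTheorem5:
  fixes k :: nat
  shows "strongly_harmonic (heisP k) \<and> strongly_harmonic (heisPt k)"
proof
  show P: "strongly_harmonic (heisP k)"
    using continuous_on_heisP heisP_centered_integral_eq_0
    by (rule strongly_harmonicI_centered_integral)
  then show "strongly_harmonic (heisPt k)"
    unfolding heisPt_eq_cnj_heisP by (rule strongly_harmonic_cnj)
qed

end
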